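(* Let $f\ge 0$ with $3f<N$ and let $K\in\mathbb N$. The broadcast-process protocol described in the context is a deterministic solution to the $K$-round Marker Problem tolerating $f$ faults, with $T=3$ steps per round, message complexity $O(f+1)$ per round and signature complexity $O((f+1)^2)$ per round.
   Context: Model. There are $N$ processes $P_1,\dots,P_N$; $[N]=\{1,\dots,N\}$. Time proceeds in discrete steps $t=0,1,2,\dots$ (synchronous network). At each step every process first receives all messages sent to it at the previous step, each together with the identity of its sender, and then may send messages to any processes; the behaviour of an honest process is given by its protocol, a deterministic function of its inputs and of all messages it has received so far. Communication is authenticated: a process $P_j$ can sign a string $m$, producing $(m)_{P_j}$; every sent message is signed by its sender; no process other than $P_j$ can produce a string containing $(m)_{P_j}$ unless it copied it from a message it received, except that corrupted processes can produce signatures of any corrupted process. An $f$-adversary knows all protocols and all inputs (including future inputs), chooses at time $0$ a set of at most $f$ processes to corrupt, and makes them behave arbitrarily subject to the signature rule; the other processes are honest and follow their protocol. $\mathcal H$ denotes the set of honest processes. A protocol tolerates $f$ faults if its required properties hold against every $f$-adversary. Message complexity = number of messages sent by honest processes; signature complexity = number of signatures contained in messages sent by honest processes, counted with multiplicity (each nested signature and each repetition counts). Marker Problem ($K$ rounds of $T$ steps). Time is divided into $K$ consecutive rounds of $T$ steps. At the end of each round every honest process decides either "unmarked" or "marked, with previous marked process $d$" where $d\in[N]\cup\{\perp\}$. The marked process $M$ of round $1$ is $P_1$ if $P_1\in\mathcal H$ and $\perp$ otherwise; the marked process of round $i+1$ is the honest process that decided "marked" at the end of round $i$, or $\perp$ if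 there is none. At the beginning of round $i$, if $M\neq\perp$, $M$ receives an input $I_i\in[N]$ ("send the marker to $P_{I_i}$"). Required at the end of every round $i$: (consistency) at most one honest process decides it is marked; (liveness) if $M\in\mathcal H$, $I_i=n$ and $P_n\in\mathcal H$, then $P_n$ decides it is marked with previous marked process $M$; (non-impersonation) if $M=\perp$ and an honest process decides it is marked with previous marked process $d$, then $d\notin\mathcal H$. The message/signature complexity per round counts messages/signatures sent by honest processes during one round. Broadcast-process protocol. Fix $3f+1$ distinct processes, called broadcast processes. Each round $i$ consists of three steps. A "proof that $Q$ is marked at round $i$" is the empty string if $i=1$ and $Q=P_1$, and for $i>1$ is a collection of messages "$X$ pays $Q$ at round $i-1$" (for a single $X$) signed by at least $2f+1$ distinct broadcast processes. Step 1: the marked process $M$ with input $I_i=n$ sends the signed message "I want to pay $P_n$ at round $i$", together with its proof that it is marked at round $i$, to every broadcast process. Step 2: each honest broadcast process that received at least one such message carrying a valid proof (for round $i$) chooses one of them, say from $M$ to $P_n$, and sends the signed message "$M$ pays $P_n$ at round $i$" to $P_n$ only; it sends at most one such message per round. Step 3: a process $P_n$ that received messages "$M$ pays $P_n$ at round $i$" (same $M$) signed by at least $2f+1$ distinct broadcast processes decides that it is marked with previous marked process $M$, and keeps these messages as its proof that it is marked at round $i+1$; otherwise it decides it is unmarked. *)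

theory Defs
  imports Main
begin

text \<open>Processes are the natural numbers 1..N. WantPay n i is the statement
  "I want to pay P_n at round i"; PaysM X Q i is "X pays Q at round i".\<close>

datatype msg =
    Data nat
  | WantPay nat nat
  | PaysM nat nat nat
  | Tup "msg list"
  | Sig nat msg

primrec subterms :: "msg \<Rightarrow> msg set" where
  "subterms (Data k) = {Data k}"
| "subterms (WantPay n i) = {WantPay n i}"
| "subterms (PaysM x q i) = {PaysM x q i}"
| "subterms (Tup ms) = insert (Tup ms) (\<Union> (set (map subterms ms)))"
| "subterms (Sig j m) = insert (Sig j m) (subterms m)"

primrec nsigs :: "msg \<Rightarrow> nat" where
  "nsigs (Data k) = 0"
| "nsigs (WantPay n i) = 0"
| "nsigs (PaysM x q i) = 0"
| "nsigs (Tup ms) = sum_list (map nsigs ms)"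
| "nsigs (Sig j m) = Suc (nsigs m)"

text \<open>A sent message is a triple (sender, receiver, payload); the string actually
  transmitted is Sig sender payload (every sent message is signed by its sender).\<close>
type_synonym msgs = "(nat \<times> nat \<times> msg) set"

datatype decision = Unmarked | Marked "nat option"

definition valid_proof :: "nat \<Rightarrow> nat set \<Rightarrow> nat \<Rightarrow> nat \<Rightarrow> msg list \<Rightarrow> bool" where
  "valid_proof f B Q i prf \<longleftrightarrow>
     (i = 1 \<and> Q = 1 \<and> prf = []) \<or>
     (i > 1 \<and> (\<exists>X. (\<forall>x\<in>set prf. \<exists>b. x = Sig b (PaysM X Q (i - 1))) \<and>
                   card {b\<in>B. Sig b (PaysM X Q (i - 1)) \<in> set prf} \<ge> 2 * f + 1))"

definition pays_signers :: "nat set \<Rightarrow> msgs \<Rightarrow> nat \<Rightarrow> nat \<Rightarrow> nat \<Rightarrow> nat set" where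
  "pays_signers B S p X i = {b\<in>B. (b, p, PaysM X p i) \<in> S}"

definition decide :: "nat \<Rightarrow> nat set \<Rightarrow> msgs \<Rightarrow> nat \<Rightarrow> nat \<Rightarrow> decision" where
  "decide f B S p i =
     (if \<exists>X. card (pays_signers B S p X i) \<ge> 2 * f + 1
      then Marked (Some (SOME X. card (pays_signers B S p X i) \<ge> 2 * f + 1))
      else Unmarked)"

definition kept_proof :: "nat \<Rightarrow> nat set \<Rightarrow> msgs \<Rightarrow> nat \<Rightarrow> nat \<Rightarrow> msg list" where
  "kept_proof f B S p i =
     (let X = (SOME X. card (pays_signers B S p X i) \<ge> 2 * f + 1)
      in map (\<lambda>b. Sig b (PaysM X p i)) (sorted_list_of_set (pays_signers B S p X i)))"

text \<open>Honest processes that are marked at round i together with the proof they keep.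
  S2 is the set of messages sent at step 2 of round i-1 (received at step 3).\<close>
definition holders :: "nat \<Rightarrow> nat set \<Rightarrow> nat set \<Rightarrow> nat \<Rightarrow> msgs \<Rightarrow> (nat \<times> msg list) set" where
  "holders f B H i S2 =
     (if i = 1 then (if 1 \<in> H then {(1, [])} else {})
      else {(p, kept_proof f B S2 p (i - 1)) | p. p \<in> H \<and> decide f B S2 p (i - 1) \<noteq> Unmarked})"

definition step1_msgs :: "nat \<Rightarrow> nat set \<Rightarrow> nat set \<Rightarrow> (nat \<Rightarrow> nat) \<Rightarrow> nat \<Rightarrow> msgs \<Rightarrow> msgs" where
  "step1_msgs f B H I i S2 =
     {(h, b, Tup (WantPay (I i) i # prf)) | h b prf. (h, prf) \<in> holders f B H i S2 \<and> b \<in> B}"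

definition step2_msgs :: "nat \<Rightarrow> nat \<Rightarrow> nat set \<Rightarrow> nat set \<Rightarrow> nat \<Rightarrow> msgs \<Rightarrow> msgs" where
  "step2_msgs N f B H i S1 =
     (\<Union>b\<in>B \<inter> H.
        let cands = {(s, n). \<exists>prf. (s, b, Tup (WantPay n i # prf)) \<in> S1 \<and> n \<in> {1..N}
                                  \<and> valid_proof f B s i prf}
        in if cands = {} then {}
           else (case (SOME x. x \<in> cands) of (s, n) \<Rightarrow> {(b, n, PaysM s n i)}))"

text \<open>Messages sent by honest processes at step t (round t div 3 + 1, step t mod 3 + 1),
  given the sets S1, S2 of all messages sent at steps t-1 and t-2.\<close>
definition honest_msgs ::
  "nat \<Rightarrow> nat \<Rightarrow> nat set \<Rightarrow> (nat \<Rightarrow> nat) \<Rightarrow> nat set \<Rightarrow> nat \<Rightarrow> msgs \<Rightarrow> msgs \<Rightarrow> msgs" where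
  "honest_msgs N f B I Cor t S1 S2 =
     (let i = t div 3 + 1; H = {1..N} - Cor in
      if t mod 3 = 0 then step1_msgs f B H I i S2
      else if t mod 3 = 1 then step2_msgs N f B H i S1
      else {})"

text \<open>Execution: adv t are the messages the corrupted processes send at step t.
  run t = (messages sent at step t, messages sent at step t-1).\<close>
primrec run ::
  "nat \<Rightarrow> nat \<Rightarrow> nat set \<Rightarrow> (nat \<Rightarrow> nat) \<Rightarrow> nat set \<Rightarrow> (nat \<Rightarrow> msgs) \<Rightarrow> nat \<Rightarrow> msgs \<times> msgs" where
  "run N f B I Cor adv 0 = (honest_msgs N f B I Cor 0 {} {} \<union> adv 0, {})"
| "run N f B I Cor adv (Suc t) =
     (let (S1, S2) = run N f B I Cor adv t
      in (honest_msgs N f B I Cor (Suc t) S1 S2 \<union> adv (Suc t), S1))"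

definition sent where
  "sent N f B I Cor adv t = fst (run N f B I Cor adv t)"

text \<open>Decision of process p at the end of round i (i \<ge> 1): step 3 of round i is step
  3(i-1)+2, where p receives the messages sent at step 3(i-1)+1.\<close>
definition decision where
  "decision N f B I Cor adv i p = decide f B (sent N f B I Cor adv (3 * (i - 1) + 1)) p i"

definition honest :: "nat \<Rightarrow> nat set \<Rightarrow> nat set" where
  "honest N Cor = {1..N} - Cor"

definition marked where
  "marked N f B I Cor adv i =
     (if i = 1 then (if 1 \<in> honest N Cor then Some 1 else None)
      else if \<exists>p\<in>honest N Cor. decision N f B I Cor adv (i - 1) p \<noteq> Unmarked
      then Some (SOME p. p \<in> honest N Cor \<and> decision N f B I Cor adv (i - 1) p \<noteq> Unmarked)
      else None)"

definition adv_ok where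
  "adv_ok N f B I Cor adv \<longleftrightarrow>
     Cor \<subseteq> {1..N} \<and> card Cor \<le> f \<and>
     (\<forall>t s d m. (s, d, m) \<in> adv t \<longrightarrow>
        s \<in> Cor \<and> d \<in> {1..N} \<and>
        (\<forall>j m'. Sig j m' \<in> subterms m \<and> j \<notin> Cor \<longrightarrow>
           (\<exists>t'<t. \<exists>s' m''. (s', s, m'') \<in> sent N f B I Cor adv t' \<and>
                             Sig j m' \<in> subterms (Sig s' m''))))"

definition marker_solution where
  "marker_solution N f B I Cor adv K \<longleftrightarrow>
     (\<forall>i\<in>{1..K}.
        card {p\<in>honest N Cor. decision N f B I Cor adv i p \<noteq> Unmarked} \<le> 1 \<and>
        (\<forall>m. marked N f B I Cor adv i = Some m \<and> m \<in> honest N Cor \<and> I i \<in> honest N Cor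
              \<longrightarrow> decision N f B I Cor adv i (I i) = Marked (Some m)) \<and>
        (marked N f B I Cor adv i = None \<longrightarrow>
           (\<forall>p\<in>honest N Cor. \<forall>d. decision N f B I Cor adv i p = Marked d \<longrightarrow>
               (case d of None \<Rightarrow> True | Some x \<Rightarrow> x \<notin> honest N Cor))))"

definition round_honest_msgs where
  "round_honest_msgs N f B I Cor adv i =
     {(t, s, d, m). t \<in> {3 * (i - 1)..<3 * i} \<and> (s, d, m) \<in> sent N f B I Cor adv t
                    \<and> s \<in> honest N Cor}"

definition round_honest_sigs where
  "round_honest_sigs N f B I Cor adv i =
     (\<Sum>(t, s, d, m)\<in>round_honest_msgs N f B I Cor adv i. nsigs (Sig s m))"

definition setting_ok where
  "setting_ok N f K B I Cor adv \<longleftrightarrow>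
     3 * f < N \<and> B \<subseteq> {1..N} \<and> card B = 3 * f + 1 \<and> (\<forall>i\<in>{1..K}. I i \<in> {1..N}) \<and>
     adv_ok N f B I Cor adv"

end

theory Submission imports Defs begin

text \<open>Any two sets of 2f+1 of the 3f+1 broadcast processes share an honest member, and an
  honest broadcast process pays at most one process per round. Hence at most one process
  collects 2f+1 payments in a round, which gives consistency. Signatures of honest processes
  cannot be forged, so among the 2f+1 signatures of any valid proof offered in round i some
  honest one traces back to a payment of round i-1; therefore only the marked process can
  present a valid proof. If it is honest, every honest broadcast process sees its request as
  the only valid one and pays its target, giving liveness; and an honest process that makes
  a request at all is the marked one, giving non-impersonation. In each round there is only
  one request maker, so honest processes send at most 3f+1 requests, each carrying at most
  3f+2 signatures, and 3f+1 single-signature payments.\<close>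

lemma quorum_intersection:
  assumes "finite B" "A1 \<subseteq> B" "A2 \<subseteq> B" "card B + card (B \<inter> C) < card A1 + card A2"
  obtains b where "b \<in> A1" "b \<in> A2" "b \<notin> C"
proof -
  have fin: "finite A1" "finite A2" using assms finite_subset by auto
  have "card (A1 \<union> A2) \<le> card B" using assms by (intro card_mono) auto
  moreover have "card (A1 \<union> A2) + card (A1 \<inter> A2) = card A1 + card A2"
    using card_Un_Int[OF fin] by simp
  ultimately have "\<not> card (A1 \<inter> A2) \<le> card (B \<inter> C)" using assms by linarith
  then have "\<not> A1 \<inter> A2 \<subseteq> B \<inter> C" using assms by (meson card_mono finite_Int)
  then show ?thesis using that assms by blast
qed

lemma subterms_self: "x \<in> subterms x"
  by (cases x) auto

definition candidates :: "nat \<Rightarrow> nat \<Rightarrow> nat set \<Rightarrow> nat \<Rightarrow> msgs \<Rightarrow> nat \<Rightarrow> (nat \<times> nat) set" where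
  "candidates N f B i S1 b = {(s, n). \<exists>prf. (s, b, Tup (WantPay n i # prf)) \<in> S1 \<and> n \<in> {1..N}
                                  \<and> valid_proof f B s i prf}"

lemma step2_msgs_iff:
  "(b, d, m) \<in> step2_msgs N f B H i S1 \<longleftrightarrow>
    b \<in> B \<and> b \<in> H \<and> candidates N f B i S1 b \<noteq> {} \<and>
    (m, d) = (case SOME x. x \<in> candidates N f B i S1 b of (s, n) \<Rightarrow> (PaysM s n i, n))"
  unfolding step2_msgs_def candidates_def[symmetric] Let_def
  by (auto simp: prod.case_eq_if split: if_splits)

lemma step1_msgs_iff:
  "(h, b, m) \<in> step1_msgs f B H I i S2 \<longleftrightarrow>
    (\<exists>prf. (h, prf) \<in> holders f B H i S2 \<and> b \<in> B \<and> m = Tup (WantPay (I i) i # prf))"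
  unfolding step1_msgs_def by blast

lemma decide_MarkedE:
  assumes "decide f B S p i = Marked d"
  obtains X where "d = Some X" "card (pays_signers B S p X i) \<ge> 2 * f + 1"
    "kept_proof f B S p i =
       map (\<lambda>b. Sig b (PaysM X p i)) (sorted_list_of_set (pays_signers B S p X i))"
proof -
  have ex: "\<exists>X. card (pays_signers B S p X i) \<ge> 2 * f + 1"
    using assms unfolding decide_def by (auto split: if_splits)
  then show ?thesis using that someI_ex[OF ex] assms unfolding decide_def kept_proof_def Let_def
    by auto
qed

lemma set_kept_proof:
  assumes "x \<in> set (kept_proof f B S p i)"
  obtains b X where "x = Sig b (PaysM X p i)" "(b, p, PaysM X p i) \<in> S"
  using assms that unfolding kept_proof_def Let_def pays_signers_def
  by (cases "finite (pays_signers B S p (SOME X. card (pays_signers B S p X i) \<ge> 2 * f + 1) i)")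
    (auto simp: pays_signers_def)

lemma holders_iff:
  "(h, prf) \<in> holders f B H i S2 \<longleftrightarrow> h \<in> H \<and>
     (if i = 1 then h = 1 \<and> prf = []
      else prf = kept_proof f B S2 h (i - 1) \<and> decide f B S2 h (i - 1) \<noteq> Unmarked)"
  unfolding holders_def by auto

lemma decide_eq_Marked:
  assumes "card (pays_signers B S p X i) \<ge> 2 * f + 1"
    and "\<And>Y. card (pays_signers B S p Y i) \<ge> 2 * f + 1 \<Longrightarrow> Y = X"
  shows "decide f B S p i = Marked (Some X)"
  using assms someI[of "\<lambda>Y. card (pays_signers B S p Y i) \<ge> 2 * f + 1", OF assms(1)]
  unfolding decide_def by auto

lemma valid_kept_proof:
  assumes "finite B" "decide f B S p j \<noteq> Unmarked" "j \<noteq> 0"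
  shows "valid_proof f B p (Suc j) (kept_proof f B S p j)"
proof -
  obtain d where "decide f B S p j = Marked d" using assms(2) by (cases "decide f B S p j") auto
  then obtain X where card: "card (pays_signers B S p X j) \<ge> 2 * f + 1"
    and kept: "kept_proof f B S p j =
      map (\<lambda>b. Sig b (PaysM X p j)) (sorted_list_of_set (pays_signers B S p X j))"
    by (rule decide_MarkedE)
  have fin: "finite (pays_signers B S p X j)" using assms(1) unfolding pays_signers_def by simp
  then have "{b \<in> B. Sig b (PaysM X p j) \<in> set (kept_proof f B S p j)} = pays_signers B S p X j"
    unfolding kept by (auto simp: pays_signers_def)
  then show ?thesis using card assms(3) fin unfolding valid_proof_def kept by auto
qed

lemma nsigs_kept_proof_le:
  assumes "finite B"
  shows "sum_list (map nsigs (kept_proof f B S p j)) \<le> card B"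
proof -
  define PS where "PS = pays_signers B S p (SOME X. card (pays_signers B S p X j) \<ge> 2 * f + 1) j"
  have "PS \<subseteq> B" unfolding PS_def pays_signers_def by auto
  moreover have "sum_list (map nsigs (kept_proof f B S p j)) = length (sorted_list_of_set PS)"
  proof -
    have "sum_list (map nsigs (map (\<lambda>b. Sig b M) xs)) = length xs" if "nsigs M = 0" for M xs
      using that by (induction xs) auto
    then show ?thesis unfolding kept_proof_def Let_def PS_def[symmetric] by simp
  qed
  ultimately show ?thesis using assms card_mono by fastforce
qed

lemma card_step1_msgs_le:
  assumes "finite B" "holders f B H i S2 \<subseteq> {a}"
  shows "finite (step1_msgs f B H I i S2)" "card (step1_msgs f B H I i S2) \<le> card B"
proof -
  define request :: "nat \<Rightarrow> nat \<times> nat \<times> msg"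
    where "request b = (fst a, b, Tup (WantPay (I i) i # snd a))" for b
  have sub: "step1_msgs f B H I i S2 \<subseteq> request ` B"
    using assms(2) unfolding step1_msgs_def request_def by auto
  then show "finite (step1_msgs f B H I i S2)" using assms(1) finite_subset by blast
  show "card (step1_msgs f B H I i S2) \<le> card B"
    using card_mono[OF finite_imageI[OF assms(1)] sub] card_image_le[OF assms(1), of request]
    by linarith
qed

lemma card_step2_msgs_le:
  assumes "finite B"
  shows "finite (step2_msgs N f B H i S1)" "card (step2_msgs N f B H i S1) \<le> card B"
proof -
  define payment where "payment b = (case SOME x. x \<in> candidates N f B i S1 b of
      (s, n) \<Rightarrow> (b, n, PaysM s n i))" for b
  have sub: "step2_msgs N f B H i S1 \<subseteq> payment ` B"
  proof
    fix x assume x: "x \<in> step2_msgs N f B H i S1"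
    obtain b d m where bdm: "x = (b, d, m)" by (cases x)
    obtain s n where sn: "(SOME y. y \<in> candidates N f B i S1 b) = (s, n)" by fastforce
    have "b \<in> B" "x = payment b"
      using x unfolding bdm step2_msgs_iff payment_def sn by auto
    then show "x \<in> payment ` B" by blast
  qed
  then show "finite (step2_msgs N f B H i S1)" using assms finite_subset by blast
  show "card (step2_msgs N f B H i S1) \<le> card B"
    using card_mono[OF finite_imageI[OF assms] sub] card_image_le[OF assms, of payment] by linarith
qed

locale execution =
  fixes N f :: nat and B :: "nat set" and I :: "nat \<Rightarrow> nat" and Cor :: "nat set"
    and adv :: "nat \<Rightarrow> msgs"
  assumes Cor_subset: "Cor \<subseteq> {1..N}" and card_Cor: "card Cor \<le> f"
    and B_subset: "B \<subseteq> {1..N}" and card_B: "card B = 3 * f + 1"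
    and adversary: "adv_ok N f B I Cor adv"
begin

abbreviation H where "H \<equiv> {1..N} - Cor"
abbreviation snt where "snt t \<equiv> sent N f B I Cor adv t"

definition honest_step_msgs :: "nat \<Rightarrow> msgs" where
  "honest_step_msgs t = honest_msgs N f B I Cor t
     (if t = 0 then {} else snt (t - 1)) (if t < 2 then {} else snt (t - 2))"

definition payments :: "nat \<Rightarrow> msgs" where
  "payments j = snt (3 * (j - 1) + 1)"

definition prev_payments :: "nat \<Rightarrow> msgs" where
  "prev_payments i = (if i = 1 then {} else payments (i - 1))"

definition round_holders :: "nat \<Rightarrow> (nat \<times> msg list) set" where
  "round_holders i = holders f B H i (prev_payments i)"

lemma finite_B: "finite B"
  using card_B card.infinite by fastforce

lemma card_B_Int_Cor: "card (B \<inter> Cor) \<le> f"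
  using card_Cor Cor_subset
  by (meson card_mono finite_atLeastAtMost finite_subset inf_le2 le_trans)

lemma sent_eq: "snt t = honest_step_msgs t \<union> adv t"
proof (cases "t < 2")
  case True
  then show ?thesis by (cases t) (auto simp: sent_def honest_step_msgs_def split: prod.splits)
next
  case False
  then obtain t' where t': "t = Suc (Suc t')" by (metis add_2_eq_Suc le_add_diff_inverse not_less)
  have "snd (run N f B I Cor adv (Suc t')) = snt t'" by (simp add: sent_def split: prod.splits)
  then show ?thesis using t' by (simp add: sent_def honest_step_msgs_def split: prod.splits)
qed

lemma adv_sender: "(s, d, m) \<in> adv t \<Longrightarrow> s \<in> Cor"
  using adversary unfolding adv_ok_def by blast

lemma sent_honest: "(s, d, m) \<in> snt t \<Longrightarrow> s \<notin> Cor \<Longrightarrow> (s, d, m) \<in> honest_step_msgs t"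
  using sent_eq adv_sender by blast

lemma honest_step_msgs_sent: "x \<in> honest_step_msgs t \<Longrightarrow> x \<in> snt t"
  using sent_eq by blast

lemma honest_step1:
  assumes "i \<ge> 1"
  shows "honest_step_msgs (3 * (i - 1)) = step1_msgs f B H I i (prev_payments i)"
proof -
  obtain k where i: "i = Suc k" using assms by (cases i) auto
  have "(3 * k) mod 3 = 0" "(3 * k) div 3 = k" by simp_all
  moreover have "(if 3 * k < 2 then {} else snt (3 * k - 2)) = prev_payments i"
  proof (cases k)
    case (Suc k')
    then have "3 * k - 2 = 3 * k' + 1" by simp
    then show ?thesis using Suc i by (simp add: prev_payments_def payments_def)
  qed (simp add: prev_payments_def i)
  ultimately show ?thesis using i by (simp add: honest_step_msgs_def honest_msgs_def)
qed

lemma honest_step2: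
  assumes "i \<ge> 1"
  shows "honest_step_msgs (3 * (i - 1) + 1) = step2_msgs N f B H i (snt (3 * (i - 1)))"
proof -
  obtain k where i: "i = Suc k" using assms by (cases i) auto
  have "(3 * k + 1) mod 3 = 1" "(3 * k + 1) div 3 = k" by simp_all
  then show ?thesis using i by (simp add: honest_step_msgs_def honest_msgs_def)
qed

lemma honest_step3: "honest_step_msgs (3 * j + 2) = {}"
proof -
  have "(3 * j + 2) mod 3 = 2" by presburger
  then show ?thesis by (simp add: honest_step_msgs_def honest_msgs_def)
qed

lemma step_cases:
  fixes t :: nat
  obtains i where "i \<ge> 1" "t = 3 * (i - 1)" | i where "i \<ge> 1" "t = 3 * (i - 1) + 1"
    | j where "t = 3 * j + 2"
proof -
  have "t = 3 * (t div 3) \<or> t = 3 * (t div 3) + 1 \<or> t = 3 * (t div 3) + 2" by presburger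
  then show ?thesis using that(1,2)[of "t div 3 + 1"] that(3)[of "t div 3"] by auto
qed

lemma quorums_share_honest:
  assumes "A1 \<subseteq> B" "A2 \<subseteq> B" "card A1 \<ge> 2 * f + 1" "card A2 \<ge> 2 * f + 1"
  obtains b where "b \<in> A1" "b \<in> A2" "b \<notin> Cor"
proof -
  have "card B + card (B \<inter> Cor) < card A1 + card A2"
    using assms(3,4) card_B card_B_Int_Cor by linarith
  then show ?thesis using quorum_intersection[OF finite_B assms(1,2)] that by blast
qed

lemma honest_pays_round:
  assumes "(b, Q, PaysM X Q r) \<in> snt t" "b \<notin> Cor"
  shows "r \<ge> 1" "t = 3 * (r - 1) + 1" "b \<in> B"
proof -
  have msg: "(b, Q, PaysM X Q r) \<in> honest_step_msgs t" using assms sent_honest by blast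
  have "r \<ge> 1 \<and> t = 3 * (r - 1) + 1 \<and> b \<in> B"
  proof (cases t rule: step_cases)
    case (1 i)
    then show ?thesis using msg honest_step1[OF 1(1)] by (auto simp: step1_msgs_iff)
  next
    case (2 i)
    then show ?thesis
      using msg honest_step2[OF 2(1)] by (auto simp: step2_msgs_iff split: prod.splits)
  next
    case (3 j)
    then show ?thesis using msg honest_step3 by simp
  qed
  then show "r \<ge> 1" "t = 3 * (r - 1) + 1" "b \<in> B" by simp_all
qed

text \<open>Round j = 0 is handled through Suc (j - 1), since payments 0 = payments 1.\<close>

lemma honest_payment_functional:
  assumes "(b, d, m) \<in> payments j" "(b, d', m') \<in> payments j" "b \<notin> Cor"
  shows "d = d' \<and> m = m'"
proof -
  have "payments j = snt (3 * (Suc (j - 1) - 1) + 1)" by (simp add: payments_def)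
  then have "(b, d, m) \<in> step2_msgs N f B H (Suc (j - 1)) (snt (3 * (j - 1)))"
    "(b, d', m') \<in> step2_msgs N f B H (Suc (j - 1)) (snt (3 * (j - 1)))"
    using assms sent_honest honest_step2[of "Suc (j - 1)"] by auto
  then show ?thesis unfolding step2_msgs_iff by (metis prod.inject)
qed

lemma honest_pays_once:
  assumes "(b, p, PaysM X p j) \<in> snt t" "(b, q, PaysM Y q j) \<in> snt t'" "b \<notin> Cor"
  shows "p = q \<and> X = Y"
  using honest_payment_functional[of b p "PaysM X p j" j q "PaysM Y q j"]
    honest_pays_round[OF assms(1,3)] honest_pays_round[OF assms(2,3)] assms
  unfolding payments_def by auto

lemma paying_quorums_agree:
  assumes "card (pays_signers B (payments j) p X j) \<ge> 2 * f + 1"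
    and "card (pays_signers B (payments j) q Y j) \<ge> 2 * f + 1"
  shows "p = q \<and> X = Y"
proof -
  obtain b where "b \<in> pays_signers B (payments j) p X j" "b \<in> pays_signers B (payments j) q Y j"
    "b \<notin> Cor"
    using quorums_share_honest[OF _ _ assms] unfolding pays_signers_def by blast
  then show ?thesis using honest_pays_once unfolding pays_signers_def payments_def by blast
qed

lemma decided_unique:
  assumes "decide f B (payments j) p j \<noteq> Unmarked" "decide f B (payments j) q j \<noteq> Unmarked"
  shows "p = q"
  using assms paying_quorums_agree by (metis decision.exhaust decide_MarkedE)

text \<open>By induction on the sending time: the adversary can only copy the signature from an
  earlier message, and the only honest messages containing it are the signer's own payment
  and proofs made of received payments.\<close>

lemma honest_signature_sent:
  assumes "(s, d, m) \<in> snt t" "Sig b (PaysM X Q r) \<in> subterms (Sig s m)" "b \<notin> Cor"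
  shows "(b, Q, PaysM X Q r) \<in> payments r"
proof -
  have "\<exists>t'. (b, Q, PaysM X Q r) \<in> snt t'"
    using assms(1,2)
  proof (induction t arbitrary: s d m rule: less_induct)
    case (less t)
    show ?case
    proof (cases "(s, d, m) \<in> adv t")
      case True
      then have "Sig b (PaysM X Q r) \<in> subterms m" using adv_sender less.prems(2) assms(3) by auto
      then obtain t' s' m' where "t' < t" "(s', s, m') \<in> snt t'"
        "Sig b (PaysM X Q r) \<in> subterms (Sig s' m')"
        using adversary True assms(3) unfolding adv_ok_def by blast
      then show ?thesis using less.IH by blast
    next
      case False
      then have msg: "(s, d, m) \<in> honest_step_msgs t" using less.prems(1) sent_eq by blast
      show ?thesis
      proof (cases t rule: step_cases)
        case (1 i)
        then obtain pr where hold: "(s, pr) \<in> holders f B H i (prev_payments i)"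
          and m: "m = Tup (WantPay (I i) i # pr)"
          using msg honest_step1[OF 1(1)] step1_msgs_iff by auto
        from less.prems(2) obtain x where x: "x \<in> set pr" "Sig b (PaysM X Q r) \<in> subterms x"
          unfolding m by auto
        then have "i \<noteq> 1" "pr = kept_proof f B (payments (i - 1)) s (i - 1)"
          using hold unfolding holders_iff prev_payments_def by (auto split: if_splits)
        then obtain b' X' where "x = Sig b' (PaysM X' s (i - 1))"
          "(b', s, PaysM X' s (i - 1)) \<in> payments (i - 1)"
          using x(1) set_kept_proof by metis
        then show ?thesis using x(2) unfolding payments_def by auto
      next
        case (2 i)
        then obtain s' n where "m = PaysM s' n i" "d = n"
          using msg honest_step2[OF 2(1)] by (auto simp: step2_msgs_iff split: prod.splits)
        then show ?thesis using less.prems by auto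
      next
        case (3 j)
        then show ?thesis using msg honest_step3 by simp
      qed
    qed
  qed
  then show ?thesis using honest_pays_round assms(3) unfolding payments_def by blast
qed

lemma decision_eq: "decision N f B I Cor adv i p = decide f B (payments i) p i"
  by (simp add: decision_def payments_def)

lemma consistency: "card {p \<in> honest N Cor. decision N f B I Cor adv i p \<noteq> Unmarked} \<le> 1"
proof -
  have "finite {p \<in> honest N Cor. decision N f B I Cor adv i p \<noteq> Unmarked}"
    unfolding honest_def by simp
  then show ?thesis
    using card_le_Suc0_iff_eq decided_unique unfolding decision_eq One_nat_def by blast
qed

lemma marked_SomeD:
  assumes "marked N f B I Cor adv i = Some m"
  shows "m \<in> H" "i = 1 \<Longrightarrow> m = 1"
    "i \<noteq> 1 \<Longrightarrow> decide f B (payments (i - 1)) m (i - 1) \<noteq> Unmarked"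
proof -
  have "m \<in> H \<and> (i = 1 \<longrightarrow> m = 1) \<and>
    (i \<noteq> 1 \<longrightarrow> decide f B (payments (i - 1)) m (i - 1) \<noteq> Unmarked)"
  proof (cases "i = 1")
    case False
    then have ex: "\<exists>p. p \<in> honest N Cor \<and> decision N f B I Cor adv (i - 1) p \<noteq> Unmarked"
      and "m = (SOME p. p \<in> honest N Cor \<and> decision N f B I Cor adv (i - 1) p \<noteq> Unmarked)"
      using assms unfolding marked_def by (auto split: if_splits)
    then show ?thesis using someI_ex[OF ex] False unfolding decision_eq honest_def by simp
  qed (use assms in \<open>auto simp: marked_def honest_def split: if_splits\<close>)
  then show "m \<in> H" "i = 1 \<Longrightarrow> m = 1"
    "i \<noteq> 1 \<Longrightarrow> decide f B (payments (i - 1)) m (i - 1) \<noteq> Unmarked" by simp_all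
qed

lemma marked_holder:
  assumes "i \<ge> 1" "marked N f B I Cor adv i = Some m"
  obtains pr where "(m, pr) \<in> round_holders i" "valid_proof f B m i pr"
proof (cases "i = 1")
  case True
  then show ?thesis using that[of "[]"] marked_SomeD[OF assms(2)]
    by (simp add: round_holders_def holders_iff valid_proof_def)
next
  case False
  have "valid_proof f B m (Suc (i - 1)) (kept_proof f B (payments (i - 1)) m (i - 1))"
    using valid_kept_proof[OF finite_B marked_SomeD(3)[OF assms(2) False]] False assms(1) by simp
  then show ?thesis using that marked_SomeD[OF assms(2)] False assms(1)
    by (simp add: round_holders_def holders_iff prev_payments_def)
qed

lemma honest_step1_sender_marked:
  assumes "i \<ge> 1" "(s, b, m) \<in> snt (3 * (i - 1))" "s \<notin> Cor"
  shows "marked N f B I Cor adv i = Some s"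
proof -
  obtain pr where hold: "(s, pr) \<in> holders f B H i (prev_payments i)"
    using sent_honest[OF assms(2,3)] honest_step1[OF assms(1)] step1_msgs_iff by auto
  show ?thesis
  proof (cases "i = 1")
    case True
    then show ?thesis using hold assms(3) by (auto simp: holders_iff marked_def honest_def)
  next
    case False
    then have decided: "s \<in> honest N Cor" "decision N f B I Cor adv (i - 1) s \<noteq> Unmarked"
      using hold by (auto simp: holders_iff prev_payments_def decision_eq honest_def)
    have "(SOME p. p \<in> honest N Cor \<and> decision N f B I Cor adv (i - 1) p \<noteq> Unmarked) = s"
      using decided decided_unique by (intro some_equality) (auto simp: decision_eq)
    then show ?thesis using False decided unfolding marked_def by auto
  qed
qed

text \<open>The 2f+1 signers of the proof and the 2f+1 processes paying the marked process share an
  honest one, which paid only one process in round i - 1.\<close>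

lemma valid_proof_sender_marked:
  assumes "marked N f B I Cor adv i = Some m" "(s, b, Tup (WantPay n i # pr)) \<in> snt t"
    and "valid_proof f B s i pr"
  shows "s = m"
proof (cases "i = 1")
  case True
  then show ?thesis using assms(3) marked_SomeD(2)[OF assms(1)] by (simp add: valid_proof_def)
next
  case False
  then obtain X where signed: "card {b \<in> B. Sig b (PaysM X s (i - 1)) \<in> set pr} \<ge> 2 * f + 1"
    using assms(3) unfolding valid_proof_def by auto
  obtain d where "decide f B (payments (i - 1)) m (i - 1) = Marked d"
    using marked_SomeD(3)[OF assms(1) False]
    by (cases "decide f B (payments (i - 1)) m (i - 1)") auto
  then obtain Y where paid: "card (pays_signers B (payments (i - 1)) m Y (i - 1)) \<ge> 2 * f + 1"
    by (rule decide_MarkedE)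
  obtain b' where b': "Sig b' (PaysM X s (i - 1)) \<in> set pr"
    "b' \<in> pays_signers B (payments (i - 1)) m Y (i - 1)" "b' \<notin> Cor"
    using quorums_share_honest[OF _ _ signed paid] unfolding pays_signers_def by blast
  have "Sig b' (PaysM X s (i - 1)) \<in> subterms (Sig s (Tup (WantPay n i # pr)))"
    using b'(1) subterms_self by fastforce
  then have "(b', s, PaysM X s (i - 1)) \<in> payments (i - 1)"
    using honest_signature_sent[OF assms(2)] b'(3) by blast
  moreover have "(b', m, PaysM Y m (i - 1)) \<in> payments (i - 1)"
    using b'(2) unfolding pays_signers_def by blast
  ultimately show ?thesis using honest_pays_once b'(3) unfolding payments_def by blast
qed

lemma candidates_marked:
  assumes "i \<ge> 1" "marked N f B I Cor adv i = Some m" "I i \<in> H" "b \<in> B"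
  shows "candidates N f B i (snt (3 * (i - 1))) b = {(m, I i)}"
proof (intro equalityI subsetI)
  fix x assume x: "x \<in> {(m, I i)}"
  obtain pr where hold: "(m, pr) \<in> round_holders i" and valid: "valid_proof f B m i pr"
    using marked_holder[OF assms(1,2)] .
  have "(m, b, Tup (WantPay (I i) i # pr)) \<in> honest_step_msgs (3 * (i - 1))"
    unfolding honest_step1[OF assms(1)] step1_msgs_iff using hold assms(4)
    unfolding round_holders_def by blast
  then have "(m, b, Tup (WantPay (I i) i # pr)) \<in> snt (3 * (i - 1))"
    by (rule honest_step_msgs_sent)
  then show "x \<in> candidates N f B i (snt (3 * (i - 1))) b"
    using x valid assms(3) unfolding candidates_def by blast
next
  fix x assume "x \<in> candidates N f B i (snt (3 * (i - 1))) b"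
  then obtain s n pr where x: "x = (s, n)"
    and msg: "(s, b, Tup (WantPay n i # pr)) \<in> snt (3 * (i - 1))"
    and valid: "valid_proof f B s i pr"
    unfolding candidates_def by blast
  have "s = m" using valid_proof_sender_marked[OF assms(2) msg valid] .
  then have "s \<notin> Cor" using marked_SomeD(1)[OF assms(2)] by blast
  then have "(s, b, Tup (WantPay n i # pr)) \<in> step1_msgs f B H I i (prev_payments i)"
    using sent_honest[OF msg] honest_step1[OF assms(1)] by simp
  then have "n = I i" unfolding step1_msgs_iff by blast
  then show "x \<in> {(m, I i)}" using x \<open>s = m\<close> by simp
qed

lemma liveness:
  assumes "i \<ge> 1" "marked N f B I Cor adv i = Some m" "I i \<in> H"
  shows "decision N f B I Cor adv i (I i) = Marked (Some m)"
proof -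
  have "(b, I i, PaysM m (I i) i) \<in> payments i" if "b \<in> B - Cor" for b
  proof -
    have "b \<in> H" using that B_subset by blast
    then have "(b, I i, PaysM m (I i) i) \<in> step2_msgs N f B H i (snt (3 * (i - 1)))"
      using that candidates_marked[OF assms] unfolding step2_msgs_iff by simp
    then show ?thesis using honest_step2[OF assms(1)] honest_step_msgs_sent
      unfolding payments_def by simp
  qed
  then have "B - Cor \<subseteq> pays_signers B (payments i) (I i) m i" unfolding pays_signers_def by blast
  moreover have "finite (pays_signers B (payments i) (I i) m i)"
    using finite_B unfolding pays_signers_def by simp
  ultimately have "card (B - Cor) \<le> card (pays_signers B (payments i) (I i) m i)"
    by (rule card_mono[rotated])
  moreover have "card (B - Cor) \<ge> 2 * f + 1"
    using card_Diff_subset_Int[of B Cor] finite_B card_B card_B_Int_Cor by simp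
  ultimately have quorum: "card (pays_signers B (payments i) (I i) m i) \<ge> 2 * f + 1"
    by linarith
  show ?thesis unfolding decision_eq
  proof (rule decide_eq_Marked[OF quorum])
    fix Y assume "card (pays_signers B (payments i) (I i) Y i) \<ge> 2 * f + 1"
    then show "Y = m" using paying_quorums_agree[OF _ quorum] by blast
  qed
qed

lemma honest_payment_candidate:
  assumes "(b, p, PaysM x p i) \<in> payments i" "b \<notin> Cor"
  shows "(x, p) \<in> candidates N f B i (snt (3 * (i - 1))) b"
proof -
  have "i \<ge> 1" using honest_pays_round assms unfolding payments_def by blast
  then have "(b, p, PaysM x p i) \<in> step2_msgs N f B H i (snt (3 * (i - 1)))"
    using sent_honest assms honest_step2 unfolding payments_def by blast
  then have "candidates N f B i (snt (3 * (i - 1))) b \<noteq> {}"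
    "(SOME y. y \<in> candidates N f B i (snt (3 * (i - 1))) b) = (x, p)"
    unfolding step2_msgs_iff by (auto split: prod.splits)
  then show ?thesis by (metis some_in_eq)
qed

lemma non_impersonation:
  assumes "marked N f B I Cor adv i = None" "decision N f B I Cor adv i p = Marked (Some x)"
  shows "x \<notin> H"
proof
  assume "x \<in> H"
  obtain X where "Some x = Some X" "card (pays_signers B (payments i) p X i) \<ge> 2 * f + 1"
    using assms(2) unfolding decision_eq by (rule decide_MarkedE)
  then have quorum: "card (pays_signers B (payments i) p x i) \<ge> 2 * f + 1" by simp
  obtain b where b: "b \<in> pays_signers B (payments i) p x i" "b \<notin> Cor"
    using quorums_share_honest[OF _ _ quorum quorum] unfolding pays_signers_def by blast
  then have paid: "(b, p, PaysM x p i) \<in> payments i" unfolding pays_signers_def by blast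
  then obtain pr where "(x, b, Tup (WantPay p i # pr)) \<in> snt (3 * (i - 1))"
    using honest_payment_candidate b(2) unfolding candidates_def by blast
  moreover have "i \<ge> 1" using honest_pays_round paid b(2) unfolding payments_def by blast
  ultimately have "marked N f B I Cor adv i = Some x"
    using honest_step1_sender_marked \<open>x \<in> H\<close> by blast
  then show False using assms(1) by simp
qed

lemma round_holders_subsingleton: obtains a where "round_holders i \<subseteq> {a}"
proof -
  have "a = a'" if "a \<in> round_holders i" "a' \<in> round_holders i" for a a'
    using that decided_unique
    by (cases a, cases a')
      (auto simp: round_holders_def holders_iff prev_payments_def split: if_splits)
  then show ?thesis using that by blast
qed

lemma round_honest_msgs_subset:
  assumes "i \<ge> 1"
  shows "round_honest_msgs N f B I Cor adv i \<subseteq>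
    Pair (3 * (i - 1)) ` honest_step_msgs (3 * (i - 1)) \<union>
    Pair (3 * (i - 1) + 1) ` honest_step_msgs (3 * (i - 1) + 1)"
proof
  fix x assume "x \<in> round_honest_msgs N f B I Cor adv i"
  then obtain t s d m where x: "x = (t, s, d, m)" "t \<in> {3 * (i - 1)..<3 * i}"
    "(s, d, m) \<in> honest_step_msgs t"
    using sent_honest unfolding round_honest_msgs_def honest_def by blast
  moreover have "t = 3 * (i - 1) \<or> t = 3 * (i - 1) + 1 \<or> t = 3 * (i - 1) + 2"
    using x(2) assms by auto
  ultimately show "x \<in> Pair (3 * (i - 1)) ` honest_step_msgs (3 * (i - 1)) \<union>
    Pair (3 * (i - 1) + 1) ` honest_step_msgs (3 * (i - 1) + 1)"
    using honest_step3 by auto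
qed

lemma round_msg_count:
  assumes "i \<ge> 1"
  shows "finite (round_honest_msgs N f B I Cor adv i)"
    "card (round_honest_msgs N f B I Cor adv i) \<le> 2 * card B"
proof -
  obtain a where "round_holders i \<subseteq> {a}" by (rule round_holders_subsingleton)
  then have step1: "finite (honest_step_msgs (3 * (i - 1)))"
    "card (honest_step_msgs (3 * (i - 1))) \<le> card B"
    using card_step1_msgs_le[OF finite_B] honest_step1[OF assms] unfolding round_holders_def
    by simp_all
  have step2: "finite (honest_step_msgs (3 * (i - 1) + 1))"
    "card (honest_step_msgs (3 * (i - 1) + 1)) \<le> card B"
    using card_step2_msgs_le[OF finite_B] honest_step2[OF assms] by simp_all
  have "card (round_honest_msgs N f B I Cor adv i) \<le>
    card (Pair (3 * (i - 1)) ` honest_step_msgs (3 * (i - 1)) \<union>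
          Pair (3 * (i - 1) + 1) ` honest_step_msgs (3 * (i - 1) + 1))"
    using round_honest_msgs_subset[OF assms] step1 step2 by (intro card_mono) auto
  also have "\<dots> \<le> card (honest_step_msgs (3 * (i - 1))) + card (honest_step_msgs (3 * (i - 1) + 1))"
    using card_Un_le card_image_le step1 step2 by (meson add_le_mono le_trans)
  finally show "card (round_honest_msgs N f B I Cor adv i) \<le> 2 * card B"
    using step1 step2 by linarith
  show "finite (round_honest_msgs N f B I Cor adv i)"
    using round_honest_msgs_subset[OF assms] step1 step2 finite_subset by blast
qed

lemma nsigs_round_msg_le:
  assumes "i \<ge> 1" "(t, s, d, m) \<in> round_honest_msgs N f B I Cor adv i"
  shows "nsigs (Sig s m) \<le> card B + 1"
proof -
  have "(s, d, m) \<in> honest_step_msgs (3 * (i - 1)) \<or> (s, d, m) \<in> honest_step_msgs (3 * (i - 1) + 1)"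
    using round_honest_msgs_subset[OF assms(1)] assms(2) by blast
  then show ?thesis
  proof
    assume "(s, d, m) \<in> honest_step_msgs (3 * (i - 1))"
    then obtain pr where hold: "(s, pr) \<in> round_holders i" and m: "m = Tup (WantPay (I i) i # pr)"
      using honest_step1[OF assms(1)] step1_msgs_iff unfolding round_holders_def by auto
    have "sum_list (map nsigs pr) \<le> card B"
      using hold nsigs_kept_proof_le[OF finite_B]
      by (auto simp: round_holders_def holders_iff split: if_splits)
    then show ?thesis using m by simp
  next
    assume "(s, d, m) \<in> honest_step_msgs (3 * (i - 1) + 1)"
    then show ?thesis
      using honest_step2[OF assms(1)] by (auto simp: step2_msgs_iff split: prod.splits)
  qed
qed

lemma round_sig_count:
  assumes "i \<ge> 1"
  shows "round_honest_sigs N f B I Cor adv i \<le> 2 * card B * (card B + 1)"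
proof -
  have "round_honest_sigs N f B I Cor adv i \<le> (\<Sum>x\<in>round_honest_msgs N f B I Cor adv i. card B + 1)"
    unfolding round_honest_sigs_def
  proof (rule sum_mono)
    fix x assume "x \<in> round_honest_msgs N f B I Cor adv i"
    then show "(case x of (t, s, d, m) \<Rightarrow> nsigs (Sig s m)) \<le> card B + 1"
      using nsigs_round_msg_le[OF assms] by (cases x) auto
  qed
  also have "\<dots> = card (round_honest_msgs N f B I Cor adv i) * (card B + 1)" by simp
  also have "\<dots> \<le> 2 * card B * (card B + 1)"
    using round_msg_count(2)[OF assms] by (rule mult_le_mono1)
  finally show ?thesis .
qed

lemma round_complexity:
  assumes "i \<ge> 1"
  shows "finite (round_honest_msgs N f B I Cor adv i) \<and>
    card (round_honest_msgs N f B I Cor adv i) \<le> 18 * (f + 1) \<and>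
    round_honest_sigs N f B I Cor adv i \<le> 18 * (f + 1)^2"
proof -
  have "2 * card B * (card B + 1) \<le> 18 * (f + 1)^2"
    unfolding card_B by (simp add: power2_eq_square algebra_simps)
  then show ?thesis using round_msg_count[OF assms] round_sig_count[OF assms] card_B by auto
qed

lemma marker_solution: "marker_solution N f B I Cor adv K"
proof -
  have "\<forall>m. marked N f B I Cor adv i = Some m \<and> m \<in> honest N Cor \<and> I i \<in> honest N Cor
      \<longrightarrow> decision N f B I Cor adv i (I i) = Marked (Some m)" if "i \<in> {1..K}" for i
    using liveness that unfolding honest_def by simp
  moreover have "\<forall>p\<in>honest N Cor. \<forall>d. decision N f B I Cor adv i p = Marked d \<longrightarrow>
      (case d of None \<Rightarrow> True | Some x \<Rightarrow> x \<notin> honest N Cor)"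
    if "marked N f B I Cor adv i = None" for i
  proof (intro ballI allI impI)
    fix p d assume "decision N f B I Cor adv i p = Marked d"
    then show "case d of None \<Rightarrow> True | Some x \<Rightarrow> x \<notin> honest N Cor"
      using non_impersonation[OF that] unfolding honest_def by (cases d) auto
  qed
  ultimately show ?thesis using consistency unfolding marker_solution_def by blast
qed

end

lemma execution_if_setting_ok:
  "setting_ok N f K B I Cor adv \<Longrightarrow> execution N f B I Cor adv"
  unfolding setting_ok_def adv_ok_def execution_def by blast

theorem mainTheorem4:
  shows "(\<forall>N f K B I Cor adv. setting_ok N f K B I Cor adv \<longrightarrow>
             marker_solution N f B I Cor adv K) \<and>
         (\<exists>c::nat. \<forall>N f K B I Cor adv i. setting_ok N f K B I Cor adv \<and> i \<in> {1..K} \<longrightarrow>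
             finite (round_honest_msgs N f B I Cor adv i) \<and>
             card (round_honest_msgs N f B I Cor adv i) \<le> c * (f + 1) \<and>
             round_honest_sigs N f B I Cor adv i \<le> c * (f + 1)^2)"
proof -
  have "marker_solution N f B I Cor adv K" if "setting_ok N f K B I Cor adv" for N f K B I Cor adv
    using execution.marker_solution execution_if_setting_ok that by blast
  moreover have "finite (round_honest_msgs N f B I Cor adv i) \<and>
      card (round_honest_msgs N f B I Cor adv i) \<le> 18 * (f + 1) \<and>
      round_honest_sigs N f B I Cor adv i \<le> 18 * (f + 1)^2"
    if "setting_ok N f K B I Cor adv" "i \<in> {1..K}" for N f K B I Cor adv i
    using execution.round_complexity execution_if_setting_ok that by simp
  ultimately show ?thesis by blast
qed

end
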